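(* Let $T$ be a complete theory, $\varphi(x;y)$ a formula with characteristic sequence $\langle P_n:n<\omega\rangle$. Suppose there exists $\delta$ with $0<\delta<1$ such that for all $0<\epsilon<1$ and all $N\in\mathbb{N}$ there exist disjoint finite subsets $X_N,Y_N\subseteq P_1$ with $|X_N|=|Y_N|\geq N$ such that $(X_N,Y_N)$ is $\epsilon$-regular with density $\delta$ (with respect to the edge relation $P_2$). Then $P_1$ contains an infinite empty pair.
   Context: The characteristic sequence: $P_n(y_1,\dots,y_n):=\exists x\bigwedge_{i\le n}\varphi(x;y_i)$, interpreted in a sufficiently saturated model of $T$; standing assumption $T\vdash\forall y\exists z\forall x(\varphi(x;z)\leftrightarrow\neg\varphi(x;y))$. For finite disjoint $X,Y$, $e(X,Y)$ is the number of pairs $(x,y)\in X\times Y$ with $P_2(x,y)$, and the density is $\delta(X,Y)=e(X,Y)/|X||Y|$ (and $0$ if one is empty). $(X,Y)$ is $\epsilon$-regular if for all $X'\subseteq X$, $Y'\subseteq Y$ with $|X'|\ge\epsilon|X|$, $|Y'|\ge\epsilon|Y|$, $|\delta(X,Y)-\delta(X',Y')|<\epsilon$. An infinite empty pair in $P_1$ is a pair $(X,Y)$ of subsets of $P_1$ with $|X|=|Y|\ge\aleph_0$ and $\neg P_2(x,y)$ for all $x\in X,y\in Y$. *)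

theory Defs
  imports Complex_Main "HOL-Library.Equipollence" "HOL-Library.Countable_Set"
begin

text \<open>We work in the reduct of the monster model to the language consisting of
the single formula phi(x;y): a two-sorted structure with x-sort 'a, y-sort 'b
(tuples of the model, if x, y are tuples) and the relation phi.\<close>

datatype 'a vtm = Var nat | Par 'a

datatype ('a, 'b) fm =
    Rel "'a vtm" "'b vtm"
  | EqX "'a vtm" "'a vtm"
  | EqY "'b vtm" "'b vtm"
  | Neg "('a, 'b) fm"
  | Conj "('a, 'b) fm" "('a, 'b) fm"
  | ExX nat "('a, 'b) fm"
  | ExY nat "('a, 'b) fm"

primrec eval_tm :: "(nat \<Rightarrow> 'a) \<Rightarrow> 'a vtm \<Rightarrow> 'a" where
  "eval_tm e (Var n) = e n"
| "eval_tm e (Par a) = a"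

primrec sat :: "('a \<Rightarrow> 'b \<Rightarrow> bool) \<Rightarrow> (nat \<Rightarrow> 'a) \<Rightarrow> (nat \<Rightarrow> 'b) \<Rightarrow> ('a, 'b) fm \<Rightarrow> bool" where
  "sat R ex ey (Rel s t) = R (eval_tm ex s) (eval_tm ey t)"
| "sat R ex ey (EqX s t) = (eval_tm ex s = eval_tm ex t)"
| "sat R ex ey (EqY s t) = (eval_tm ey s = eval_tm ey t)"
| "sat R ex ey (Neg f) = (\<not> sat R ex ey f)"
| "sat R ex ey (Conj f g) = (sat R ex ey f \<and> sat R ex ey g)"
| "sat R ex ey (ExX n f) = (\<exists>a. sat R (ex(n := a)) ey f)"
| "sat R ex ey (ExY n f) = (\<exists>b. sat R ex (ey(n := b)) f)"

primrec tm_params :: "'a vtm \<Rightarrow> 'a set" where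
  "tm_params (Var n) = {}"
| "tm_params (Par a) = {a}"

primrec xparams :: "('a, 'b) fm \<Rightarrow> 'a set" where
  "xparams (Rel s t) = tm_params s"
| "xparams (EqX s t) = tm_params s \<union> tm_params t"
| "xparams (EqY s t) = {}"
| "xparams (Neg f) = xparams f"
| "xparams (Conj f g) = xparams f \<union> xparams g"
| "xparams (ExX n f) = xparams f"
| "xparams (ExY n f) = xparams f"

primrec yparams :: "('a, 'b) fm \<Rightarrow> 'b set" where
  "yparams (Rel s t) = tm_params t"
| "yparams (EqX s t) = {}"
| "yparams (EqY s t) = tm_params s \<union> tm_params t"
| "yparams (Neg f) = yparams f"
| "yparams (Conj f g) = yparams f \<union> yparams g"
| "yparams (ExX n f) = yparams f"
| "yparams (ExY n f) = yparams f"

definition satisfiable :: "('a \<Rightarrow> 'b \<Rightarrow> bool) \<Rightarrow> ('a, 'b) fm set \<Rightarrow> bool" where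
  "satisfiable R \<Sigma> \<longleftrightarrow> (\<exists>ex ey. \<forall>f\<in>\<Sigma>. sat R ex ey f)"

text \<open>Saturation (aleph_1-saturation): every finitely satisfiable set of formulas
in countably many variables over a countable set of parameters is realized.\<close>
definition saturated :: "('a \<Rightarrow> 'b \<Rightarrow> bool) \<Rightarrow> bool" where
  "saturated R \<longleftrightarrow>
     (\<forall>\<Sigma>. countable (\<Union> (xparams ` \<Sigma>)) \<and> countable (\<Union> (yparams ` \<Sigma>))
        \<and> (\<forall>\<Sigma>0. \<Sigma>0 \<subseteq> \<Sigma> \<and> finite \<Sigma>0 \<longrightarrow> satisfiable R \<Sigma>0)
        \<longrightarrow> satisfiable R \<Sigma>)"

definition P1 :: "('a \<Rightarrow> 'b \<Rightarrow> bool) \<Rightarrow> 'b \<Rightarrow> bool" where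
  "P1 \<phi> y \<longleftrightarrow> (\<exists>x. \<phi> x y)"

definition P2 :: "('a \<Rightarrow> 'b \<Rightarrow> bool) \<Rightarrow> 'b \<Rightarrow> 'b \<Rightarrow> bool" where
  "P2 \<phi> y1 y2 \<longleftrightarrow> (\<exists>x. \<phi> x y1 \<and> \<phi> x y2)"

definition edges :: "('a \<Rightarrow> 'b \<Rightarrow> bool) \<Rightarrow> 'b set \<Rightarrow> 'b set \<Rightarrow> nat" where
  "edges \<phi> X Y = card {(x, y). x \<in> X \<and> y \<in> Y \<and> P2 \<phi> x y}"

definition density :: "('a \<Rightarrow> 'b \<Rightarrow> bool) \<Rightarrow> 'b set \<Rightarrow> 'b set \<Rightarrow> real" where
  "density \<phi> X Y =
     (if X = {} \<or> Y = {} then 0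
      else real (edges \<phi> X Y) / (real (card X) * real (card Y)))"

definition eps_regular :: "('a \<Rightarrow> 'b \<Rightarrow> bool) \<Rightarrow> real \<Rightarrow> 'b set \<Rightarrow> 'b set \<Rightarrow> bool" where
  "eps_regular \<phi> \<epsilon> X Y \<longleftrightarrow>
     (\<forall>X' Y'. X' \<subseteq> X \<and> Y' \<subseteq> Y \<and> real (card X') \<ge> \<epsilon> * real (card X)
        \<and> real (card Y') \<ge> \<epsilon> * real (card Y)
        \<longrightarrow> \<bar>density \<phi> X Y - density \<phi> X' Y'\<bar> < \<epsilon>)"

definition infinite_empty_pair :: "('a \<Rightarrow> 'b \<Rightarrow> bool) \<Rightarrow> 'b set \<Rightarrow> 'b set \<Rightarrow> bool" where
  "infinite_empty_pair \<phi> X Y \<longleftrightarrow>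
     X \<subseteq> {y. P1 \<phi> y} \<and> Y \<subseteq> {y. P1 \<phi> y} \<and> X \<approx> Y \<and> infinite X
     \<and> (\<forall>x\<in>X. \<forall>y\<in>Y. \<not> P2 \<phi> x y)"

end

theory Submission
  imports Defs
begin

text \<open>Regularity turns density into a uniform count: in an \<open>\<epsilon>\<close>-regular pair of density
\<open>\<delta> < 1\<close>, for every large \<open>N \<subseteq> Y\<close> all but \<open>\<epsilon>|X|\<close> vertices of \<open>X\<close> miss a fixed proportion
\<open>c = (1 - \<delta>)/2\<close> of \<open>N\<close>.  Choosing \<open>t\<close> vertices of \<open>X\<close> greedily, each time shrinking
\<open>N\<close> to the common non-neighbours found so far, yields \<open>t\<close> vertices with at least
\<open>c\<^sup>t|Y| \<ge> t\<close> common non-neighbours, i.e. an empty pair of size \<open>t\<close>, as soon as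
\<open>\<epsilon> \<le> c\<^sup>t\<close> and \<open>|X|\<close> is large.  So \<open>P\<^sub>1\<close> contains finite empty pairs of every size, and
saturation realizes the type of an infinite one.\<close>

definition empty_pair :: "('a \<Rightarrow> 'b \<Rightarrow> bool) \<Rightarrow> 'b set \<Rightarrow> 'b set \<Rightarrow> bool" where
  "empty_pair \<phi> X Y \<longleftrightarrow>
     X \<subseteq> {y. P1 \<phi> y} \<and> Y \<subseteq> {y. P1 \<phi> y} \<and> (\<forall>x\<in>X. \<forall>y\<in>Y. \<not> P2 \<phi> x y)"

lemma edges_eq_sum:
  assumes "finite X" "finite Y"
  shows "edges \<phi> X Y = (\<Sum>x\<in>X. card {y\<in>Y. P2 \<phi> x y})"
proof -
  have "{(x, y). x \<in> X \<and> y \<in> Y \<and> P2 \<phi> x y} = Sigma X (\<lambda>x. {y\<in>Y. P2 \<phi> x y})"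
    by auto
  then show ?thesis
    unfolding edges_def using assms by simp
qed

lemma density_gt_if_all_degrees_gt:
  fixes d :: real
  assumes "finite X" "finite Y" "X \<noteq> {}" "Y \<noteq> {}"
    and deg: "\<And>x. x \<in> X \<Longrightarrow> d * card Y < card {y\<in>Y. P2 \<phi> x y}"
  shows "d < density \<phi> X Y"
proof -
  have "(\<Sum>x\<in>X. d * card Y) < (\<Sum>x\<in>X. real (card {y\<in>Y. P2 \<phi> x y}))"
    using assms by (intro sum_strict_mono) auto
  then have "card X * (d * card Y) < edges \<phi> X Y"
    by (simp add: edges_eq_sum[OF assms(1,2)])
  moreover have "0 < real (card X) * real (card Y)"
    using assms by (simp add: card_gt_0_iff)
  ultimately show ?thesis
    using assms by (simp add: density_def pos_less_divide_eq mult_ac)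
qed

lemma regular_few_high_degree_vertices:
  fixes \<epsilon> :: real
  assumes reg: "eps_regular \<phi> \<epsilon> X Y" and "finite X" "X \<noteq> {}" "0 < \<epsilon>"
    and N: "N \<subseteq> Y" "finite N" "\<epsilon> * card Y \<le> card N"
  shows "card {x\<in>X. (density \<phi> X Y + \<epsilon>) * card N < card {y\<in>N. P2 \<phi> x y}}
           < \<epsilon> * card X"
    (is "real (card ?B) < _")
proof (rule ccontr)
  assume "\<not> ?thesis"
  then have B: "\<epsilon> * card X \<le> card ?B" by simp
  moreover have "0 < \<epsilon> * card X"
    using assms by (simp add: card_gt_0_iff)
  ultimately have "0 < card ?B"
    by linarith
  then have "?B \<noteq> {}"
    by (metis card.empty less_irrefl)
  then obtain x where "(density \<phi> X Y + \<epsilon>) * card N < card {y\<in>N. P2 \<phi> x y}"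
    by blast
  then have "N \<noteq> {}" by (auto simp: not_less)
  then have "density \<phi> X Y + \<epsilon> < density \<phi> ?B N"
    using \<open>?B \<noteq> {}\<close> assms by (intro density_gt_if_all_degrees_gt) auto
  moreover have "\<bar>density \<phi> X Y - density \<phi> ?B N\<bar> < \<epsilon>"
    using reg[unfolded eps_regular_def, rule_format, of ?B N] B N(1,3) by blast
  ultimately show False by linarith
qed

lemma card_filter_add_card_filter_not:
  assumes "finite A"
  shows "card {x\<in>A. P x} + card {x\<in>A. \<not> P x} = card A"
proof -
  have "card A = card ({x\<in>A. P x} \<union> {x\<in>A. \<not> P x})"
    by (rule arg_cong[where f = card]) auto
  also have "\<dots> = card {x\<in>A. P x} + card {x\<in>A. \<not> P x}"
    using assms by (intro card_Un_disjoint) auto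
  finally show ?thesis
    by simp
qed

lemma regular_exists_many_non_neighbours:
  fixes \<phi> :: "'a \<Rightarrow> 'b \<Rightarrow> bool" and \<epsilon> c :: real
  assumes reg: "eps_regular \<phi> \<epsilon> X Y" and "finite X" "0 < \<epsilon>"
    and gap: "density \<phi> X Y + \<epsilon> + c \<le> 1"
    and N: "N \<subseteq> Y" "finite N" "\<epsilon> * card Y \<le> card N"
    and S: "S \<subseteq> X" "\<epsilon> * card X + card S < card X"
  shows "\<exists>x\<in>X - S. c * card N \<le> card {y\<in>N. \<not> P2 \<phi> x y}"
proof -
  define B where "B = {x\<in>X. (density \<phi> X Y + \<epsilon>) * card N < card {y\<in>N. P2 \<phi> x y}}"
  have "X \<noteq> {}"
    using S(2) \<open>0 < \<epsilon>\<close> by auto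
  then have "card B < \<epsilon> * card X"
    unfolding B_def using regular_few_high_degree_vertices[OF reg \<open>finite X\<close> _ \<open>0 < \<epsilon>\<close> N] by blast
  moreover have "real (card X) \<le> card (X - B - S) + card B + card S"
  proof -
    have "card X \<le> card ((X - B - S) \<union> B \<union> S)"
      using \<open>finite X\<close> S(1) by (intro card_mono) (auto simp: B_def intro: finite_subset)
    also have "\<dots> \<le> card (X - B - S) + card B + card S"
      by (meson add_mono card_Un_le le_trans order_refl)
    finally show ?thesis
      by linarith
  qed
  ultimately have "0 < card (X - B - S)"
    using S(2) by linarith
  then obtain x where x: "x \<in> X - S" "x \<notin> B"
    by (metis Diff_iff card.empty ex_in_conv less_irrefl)
  have "card {y\<in>N. P2 \<phi> x y} \<le> (density \<phi> X Y + \<epsilon>) * card N"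
    using x unfolding B_def by auto
  moreover have "(density \<phi> X Y + \<epsilon> + c) * card N \<le> card N"
    using mult_right_mono[OF gap, of "card N"] by simp
  moreover have "real (card {y\<in>N. P2 \<phi> x y}) + card {y\<in>N. \<not> P2 \<phi> x y} = card N"
    using card_filter_add_card_filter_not[OF N(2)] by (metis of_nat_add)
  ultimately have "c * card N \<le> card {y\<in>N. \<not> P2 \<phi> x y}"
    by (simp add: distrib_right)
  with x(1) show ?thesis ..
qed

lemma regular_greedy_common_non_neighbours:
  fixes \<phi> :: "'a \<Rightarrow> 'b \<Rightarrow> bool" and \<epsilon> c :: real
  assumes reg: "eps_regular \<phi> \<epsilon> X Y" and fin: "finite X" "finite Y"
    and \<epsilon>: "0 < \<epsilon>" "\<epsilon> \<le> c ^ k" and c: "0 \<le> c" "c \<le> 1"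
    and gap: "density \<phi> X Y + \<epsilon> + c \<le> 1"
    and large: "\<epsilon> * card X + k \<le> card X"
  shows "\<exists>S\<subseteq>X. card S = k \<and> c ^ k * card Y \<le> card {y\<in>Y. \<forall>x\<in>S. \<not> P2 \<phi> x y}"
  using \<epsilon>(2) large
proof (induction k)
  case 0
  show ?case by (intro exI[of _ "{}"]) auto
next
  case (Suc k)
  have "c ^ Suc k \<le> c ^ k"
    using c by (simp add: mult_left_le_one_le)
  with Suc.prems obtain S where S: "S \<subseteq> X" "card S = k"
    and NS: "c ^ k * card Y \<le> card {y\<in>Y. \<forall>x\<in>S. \<not> P2 \<phi> x y}"
    using Suc.IH by force
  define N where "N = {y\<in>Y. \<forall>x\<in>S. \<not> P2 \<phi> x y}"
  have N: "N \<subseteq> Y" "finite N" "\<epsilon> * card Y \<le> card N"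
    using fin NS Suc.prems(1) \<open>c ^ Suc k \<le> c ^ k\<close> mult_right_mono[of \<epsilon> "c ^ k" "card Y"]
    unfolding N_def by auto
  obtain x where x: "x \<in> X - S" "c * card N \<le> card {y\<in>N. \<not> P2 \<phi> x y}"
    using regular_exists_many_non_neighbours[OF reg fin(1) \<epsilon>(1) gap N S(1)] Suc.prems(2) S(2)
    by auto
  have "c ^ Suc k * card Y \<le> c * card N"
    using NS c unfolding N_def by (simp add: mult.assoc mult_left_mono)
  also have "\<dots> \<le> card {y\<in>N. \<not> P2 \<phi> x y}"
    using x(2) .
  also have "{y\<in>N. \<not> P2 \<phi> x y} = {y\<in>Y. \<forall>x'\<in>insert x S. \<not> P2 \<phi> x' y}"
    unfolding N_def by auto
  finally have "c ^ Suc k * card Y \<le> card {y\<in>Y. \<forall>x'\<in>insert x S. \<not> P2 \<phi> x' y}" .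
  moreover have "insert x S \<subseteq> X" "card (insert x S) = Suc k"
    using x(1) S fin(1) by (auto simp: finite_subset)
  ultimately show ?case
    by (intro exI[of _ "insert x S"] conjI)
qed

lemma regular_pair_contains_empty_pair:
  fixes \<phi> :: "'a \<Rightarrow> 'b \<Rightarrow> bool" and \<epsilon> c :: real
  assumes reg: "eps_regular \<phi> \<epsilon> X Y" and fin: "finite X" "finite Y"
    and \<epsilon>: "0 < \<epsilon>" "\<epsilon> \<le> c ^ t" and c: "0 \<le> c" "c \<le> 1"
    and gap: "density \<phi> X Y + \<epsilon> + c \<le> 1"
    and large: "\<epsilon> * card X + t \<le> card X" "t \<le> \<epsilon> * card Y"
  shows "\<exists>S\<subseteq>X. \<exists>T\<subseteq>Y. card S = t \<and> card T = t \<and> (\<forall>x\<in>S. \<forall>y\<in>T. \<not> P2 \<phi> x y)"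
proof -
  obtain S where S: "S \<subseteq> X" "card S = t"
    and NS: "c ^ t * card Y \<le> card {y\<in>Y. \<forall>x\<in>S. \<not> P2 \<phi> x y}"
    using regular_greedy_common_non_neighbours[OF reg fin \<epsilon> c gap large(1)] by blast
  have "real t \<le> c ^ t * card Y"
    using large(2) mult_right_mono[OF \<epsilon>(2), of "card Y"] by linarith
  with NS have "t \<le> card {y\<in>Y. \<forall>x\<in>S. \<not> P2 \<phi> x y}"
    by linarith
  then obtain T where "T \<subseteq> {y\<in>Y. \<forall>x\<in>S. \<not> P2 \<phi> x y}" "card T = t"
    by (rule obtain_subset_with_card_n)
  with S show ?thesis
    by blast
qed

lemma empty_pairs_of_every_size:
  fixes \<phi> :: "'a \<Rightarrow> 'b \<Rightarrow> bool" and \<delta> :: real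
  assumes \<delta>: "0 \<le> \<delta>" "\<delta> < 1"
    and reg: "\<And>\<epsilon> N. 0 < \<epsilon> \<Longrightarrow> \<epsilon> < 1 \<Longrightarrow> \<exists>X Y. finite X \<and> finite Y \<and>
       X \<subseteq> {y. P1 \<phi> y} \<and> Y \<subseteq> {y. P1 \<phi> y} \<and> card X = card Y \<and> N \<le> card X \<and>
       eps_regular \<phi> \<epsilon> X Y \<and> density \<phi> X Y = \<delta>"
  shows "\<exists>A B. finite A \<and> finite B \<and> card A = t \<and> card B = t \<and> empty_pair \<phi> A B"
proof -
  define c where "c = (1 - \<delta>) / 2"
  define \<epsilon> where "\<epsilon> = c ^ Suc t"  \<comment> \<open>rather than \<open>c ^ t\<close>, so that \<open>\<epsilon> < 1\<close> also for \<open>t = 0\<close>\<close>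
  have c: "0 < c" "c \<le> 1 / 2"
    using \<delta> by (auto simp: c_def)
  have "c ^ t \<le> 1"
    using c by (simp add: power_le_one)
  then have \<epsilon>: "0 < \<epsilon>" "\<epsilon> \<le> c ^ t" "\<epsilon> \<le> c"
    using c mult_left_le[of "c ^ t" c] mult_left_le_one_le[of "c ^ t" c] by (auto simp: \<epsilon>_def)
  have "\<epsilon> < 1"
    using \<epsilon>(3) c by linarith
  obtain X Y where fin: "finite X" "finite Y" and P1: "X \<subseteq> {y. P1 \<phi> y}" "Y \<subseteq> {y. P1 \<phi> y}"
    and card: "card X = card Y" "nat \<lceil>t / \<epsilon>\<rceil> + 2 * t \<le> card X"
    and XY: "eps_regular \<phi> \<epsilon> X Y" "density \<phi> X Y = \<delta>"
    using reg[OF \<epsilon>(1) \<open>\<epsilon> < 1\<close>, of "nat \<lceil>t / \<epsilon>\<rceil> + 2 * t"] by blast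
  have large: "\<epsilon> * card X + t \<le> card X"
  proof -
    have "\<epsilon> * card X \<le> 1 / 2 * card X"
      using \<epsilon>(3) c(2) by (intro mult_right_mono) auto
    moreover have "2 * real t \<le> card X"
      using card(2) by linarith
    ultimately show ?thesis
      by linarith
  qed
  have many: "t \<le> \<epsilon> * card Y"
  proof -
    have "t / \<epsilon> \<le> card Y"
      using card by linarith
    then show ?thesis
      using \<epsilon>(1) by (simp add: field_simps)
  qed
  have gap: "density \<phi> X Y + \<epsilon> + c \<le> 1"
    using XY(2) \<epsilon>(3) c_def by argo
  have "0 \<le> c" "c \<le> 1"
    using c by auto
  then obtain S T where ST: "S \<subseteq> X" "T \<subseteq> Y" "card S = t" "card T = t"
    and empty: "\<forall>x\<in>S. \<forall>y\<in>T. \<not> P2 \<phi> x y"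
    using regular_pair_contains_empty_pair[OF XY(1) fin \<epsilon>(1,2) _ _ gap large many] by auto
  have "finite S" "finite T" "empty_pair \<phi> S T"
    using ST fin P1 empty finite_subset unfolding empty_pair_def by auto
  with ST(3,4) show ?thesis
    by blast
qed

text \<open>The type of an infinite empty pair lives in the \<open>y\<close>-variables: \<open>Var (2 * i)\<close> stands
for the \<open>i\<close>-th element of the first half of the pair, \<open>Var (2 * j + 1)\<close> for the \<open>j\<close>-th
element of the second.  \<open>empty_pair_type M\<close> is the finite fragment with \<open>i, j < M\<close>.\<close>

definition P1_fm :: "nat \<Rightarrow> ('a, 'b) fm" where
  "P1_fm n = ExX 0 (Rel (Var 0) (Var n))"

definition P2_fm :: "nat \<Rightarrow> nat \<Rightarrow> ('a, 'b) fm" where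
  "P2_fm m n = ExX 0 (Conj (Rel (Var 0) (Var m)) (Rel (Var 0) (Var n)))"

definition neq_fm :: "nat \<Rightarrow> nat \<Rightarrow> ('a, 'b) fm" where
  "neq_fm m n = Neg (EqY (Var m) (Var n))"

lemma sat_P1_fm [simp]: "sat R ex ey (P1_fm n) \<longleftrightarrow> P1 R (ey n)"
  by (simp add: P1_fm_def P1_def)

lemma sat_P2_fm [simp]: "sat R ex ey (P2_fm m n) \<longleftrightarrow> P2 R (ey m) (ey n)"
  by (simp add: P2_fm_def P2_def)

lemma sat_neq_fm [simp]: "sat R ex ey (neq_fm m n) \<longleftrightarrow> ey m \<noteq> ey n"
  by (simp add: neq_fm_def)

definition empty_pair_type :: "nat \<Rightarrow> ('a, 'b) fm set" where
  "empty_pair_type M =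
     {P1_fm n | n. n < 2 * M} \<union> {Neg (P2_fm (2 * i) (2 * j + 1)) | i j. i < M \<and> j < M}
     \<union> {neq_fm (2 * i + s) (2 * j + s) | i j s. i < M \<and> j < M \<and> i \<noteq> j \<and> s < 2}"

lemma P1_fm_in_empty_pair_type: "n < 2 * M \<Longrightarrow> P1_fm n \<in> empty_pair_type M"
  unfolding empty_pair_type_def by blast

lemma non_edge_in_empty_pair_type:
  "i < M \<Longrightarrow> j < M \<Longrightarrow> Neg (P2_fm (2 * i) (2 * j + 1)) \<in> empty_pair_type M"
  unfolding empty_pair_type_def by blast

lemma neq_fm_in_empty_pair_type:
  "i < M \<Longrightarrow> j < M \<Longrightarrow> i \<noteq> j \<Longrightarrow> s < 2 \<Longrightarrow>
    neq_fm (2 * i + s) (2 * j + s) \<in> empty_pair_type M"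
  unfolding empty_pair_type_def by blast

lemma empty_pair_type_mono: "M \<le> M' \<Longrightarrow> empty_pair_type M \<subseteq> empty_pair_type M'"
  unfolding empty_pair_type_def by fastforce

lemma empty_pair_type_parameter_free:
  "f \<in> empty_pair_type M \<Longrightarrow> xparams f = {} \<and> yparams f = {}"
  unfolding empty_pair_type_def by (auto simp: P1_fm_def P2_fm_def neq_fm_def)

lemma satisfiable_empty_pair_type:
  fixes \<phi> :: "'a \<Rightarrow> 'b \<Rightarrow> bool"
  assumes "finite A" "finite B" "card A = M" "card B = M" and AB: "empty_pair \<phi> A B"
  shows "satisfiable \<phi> (empty_pair_type M)"
proof -
  obtain a b where a: "bij_betw a {..<M} A" and b: "bij_betw b {..<M} B"
    using assms(1-4) ex_bij_betw_nat_finite by (metis atLeast0LessThan)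
  define ey where "ey n = (if even n then a (n div 2) else b (n div 2))" for n
  have ey: "ey (2 * i) = a i" "ey (Suc (2 * i)) = b i" for i
    by (simp_all add: ey_def)
  have "sat \<phi> ex ey f" if "f \<in> empty_pair_type M" for ex f
  proof -
    have "P1 \<phi> (ey n)" if "n < 2 * M" for n
      using that AB bij_betwE[OF a] bij_betwE[OF b]
      by (cases "even n") (auto simp: ey_def empty_pair_def)
    moreover have "\<not> P2 \<phi> (a i) (b j)" if "i < M" "j < M" for i j
      using that AB bij_betwE[OF a] bij_betwE[OF b] by (auto simp: empty_pair_def)
    moreover have "a i \<noteq> a j" "b i \<noteq> b j" if "i < M" "j < M" "i \<noteq> j" for i j
      using that bij_betw_imp_inj_on[OF a] bij_betw_imp_inj_on[OF b]
      by (auto dest: inj_onD)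
    ultimately show ?thesis
      using \<open>f \<in> empty_pair_type M\<close> unfolding empty_pair_type_def
      by (auto simp: ey less_2_cases_iff)
  qed
  then show ?thesis
    unfolding satisfiable_def by blast
qed

lemma finite_subset_UN_mono:
  fixes S :: "nat \<Rightarrow> 'a set"
  assumes "mono S" "finite F" "F \<subseteq> (\<Union>n. S n)"
  shows "\<exists>n. F \<subseteq> S n"
  using assms(2,3)
proof (induction F rule: finite_induct)
  case empty
  show ?case by blast
next
  case (insert f F)
  then obtain m n where "F \<subseteq> S m" "f \<in> S n"
    by auto
  then have "insert f F \<subseteq> S (max m n)"
    using monoD[OF assms(1), of m "max m n"] monoD[OF assms(1), of n "max m n"] by auto
  then show ?case ..
qed

lemma saturated_realizes_infinite_empty_pair:
  fixes \<phi> :: "'a \<Rightarrow> 'b \<Rightarrow> bool"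
  assumes sat: "saturated \<phi>"
    and pairs: "\<And>M. \<exists>A B. finite A \<and> finite B \<and> card A = M \<and> card B = M \<and> empty_pair \<phi> A B"
  shows "\<exists>(a :: nat \<Rightarrow> 'b) (b :: nat \<Rightarrow> 'b). inj a \<and> inj b \<and> empty_pair \<phi> (range a) (range b)"
proof -
  define \<Sigma> where "\<Sigma> = (\<Union>M. empty_pair_type M :: ('a, 'b) fm set)"
  have "\<Union> (xparams ` \<Sigma>) = {}" "\<Union> (yparams ` \<Sigma>) = {}"
    unfolding \<Sigma>_def using empty_pair_type_parameter_free by (blast, blast)
  moreover have "satisfiable \<phi> \<Sigma>0" if sub: "\<Sigma>0 \<subseteq> \<Sigma>" and fin: "finite \<Sigma>0" for \<Sigma>0
  proof -
    have "mono empty_pair_type"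
      by (rule monoI) (rule empty_pair_type_mono)
    moreover have "\<Sigma>0 \<subseteq> (\<Union>M. empty_pair_type M)"
      using sub unfolding \<Sigma>_def .
    ultimately obtain M where "\<Sigma>0 \<subseteq> empty_pair_type M"
      using finite_subset_UN_mono fin by blast
    moreover have "satisfiable \<phi> (empty_pair_type M)"
      using pairs[of M] satisfiable_empty_pair_type by blast
    ultimately show ?thesis
      unfolding satisfiable_def by blast
  qed
  ultimately have "satisfiable \<phi> \<Sigma>"
    using sat[unfolded saturated_def, rule_format, of \<Sigma>] by simp
  then obtain ex ey where realized: "\<And>f. f \<in> \<Sigma> \<Longrightarrow> sat \<phi> ex ey f"
    unfolding satisfiable_def by blast
  have in_\<Sigma>: "P1_fm n \<in> \<Sigma>" "Neg (P2_fm (2 * i) (2 * j + 1)) \<in> \<Sigma>"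
    "i \<noteq> j \<Longrightarrow> s < 2 \<Longrightarrow> neq_fm (2 * i + s) (2 * j + s) \<in> \<Sigma>" for n i j s
    using P1_fm_in_empty_pair_type[of n "Suc n"]
      non_edge_in_empty_pair_type[of i "Suc (i + j)" j]
      neq_fm_in_empty_pair_type[of i "Suc (i + j)" j s]
    unfolding \<Sigma>_def by auto
  have distinct: "ey (2 * i + s) \<noteq> ey (2 * j + s)" if "i \<noteq> j" "s < 2" for i j s
    using realized[OF in_\<Sigma>(3)[OF that]] by simp
  define a where "a i = ey (2 * i)" for i
  define b where "b i = ey (2 * i + 1)" for i
  have "inj a" "inj b"
    using distinct[where s = 0] distinct[where s = 1] unfolding a_def b_def inj_def by auto
  moreover have "empty_pair \<phi> (range a) (range b)"
    using realized[OF in_\<Sigma>(1)] realized[OF in_\<Sigma>(2)]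
    unfolding empty_pair_def a_def b_def by auto
  ultimately show ?thesis
    by blast
qed

lemma infinite_empty_pair_of_injective:
  fixes a b :: "nat \<Rightarrow> 'b"
  assumes "inj a" "inj b" "empty_pair \<phi> (range a) (range b)"
  shows "infinite_empty_pair \<phi> (range a) (range b)"
proof -
  have a: "range a \<approx> (UNIV :: nat set)" and b: "range b \<approx> (UNIV :: nat set)"
    using inj_on_image_eqpoll_self[OF assms(1)] inj_on_image_eqpoll_self[OF assms(2)] .
  have "range a \<approx> range b"
    using eqpoll_trans[OF a eqpoll_sym[OF b]] .
  moreover have "infinite (range a)"
    using eqpoll_finite_iff[OF a] by simp
  ultimately show ?thesis
    using assms(3) unfolding infinite_empty_pair_def empty_pair_def by blast
qed

theorem mainTheorem3:
  fixes \<phi> :: "'a \<Rightarrow> 'b \<Rightarrow> bool"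
  assumes sat: "saturated \<phi>"
    and neg: "\<forall>y. \<exists>z. \<forall>x. \<phi> x z \<longleftrightarrow> \<not> \<phi> x y"
    and reg: "\<exists>\<delta>::real. 0 < \<delta> \<and> \<delta> < 1 \<and>
      (\<forall>\<epsilon>::real. 0 < \<epsilon> \<and> \<epsilon> < 1 \<longrightarrow> (\<forall>N::nat. \<exists>X Y.
         finite X \<and> finite Y \<and> X \<inter> Y = {} \<and>
         X \<subseteq> {y. P1 \<phi> y} \<and> Y \<subseteq> {y. P1 \<phi> y} \<and>
         card X = card Y \<and> card X \<ge> N \<and>
         eps_regular \<phi> \<epsilon> X Y \<and> density \<phi> X Y = \<delta>))"
  shows "\<exists>X Y. infinite_empty_pair \<phi> X Y"
proof -
  obtain \<delta> :: real where \<delta>: "0 < \<delta>" "\<delta> < 1" and reg_\<delta>: "\<forall>\<epsilon>::real. 0 < \<epsilon> \<and> \<epsilon> < 1 \<longrightarrow>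
      (\<forall>N::nat. \<exists>X Y. finite X \<and> finite Y \<and> X \<inter> Y = {} \<and>
         X \<subseteq> {y. P1 \<phi> y} \<and> Y \<subseteq> {y. P1 \<phi> y} \<and> card X = card Y \<and> card X \<ge> N \<and>
         eps_regular \<phi> \<epsilon> X Y \<and> density \<phi> X Y = \<delta>)"
    using reg by blast
  have regular: "\<exists>X Y. finite X \<and> finite Y \<and>
       X \<subseteq> {y. P1 \<phi> y} \<and> Y \<subseteq> {y. P1 \<phi> y} \<and> card X = card Y \<and> N \<le> card X \<and>
       eps_regular \<phi> \<epsilon> X Y \<and> density \<phi> X Y = \<delta>" if "0 < \<epsilon>" "\<epsilon> < 1" for \<epsilon> N
    using reg_\<delta>[rule_format, OF conjI[OF that], of N] by blast
  obtain a b :: "nat \<Rightarrow> 'b" where "inj a" "inj b" "empty_pair \<phi> (range a) (range b)"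
    using saturated_realizes_infinite_empty_pair[OF sat
        empty_pairs_of_every_size[OF less_imp_le[OF \<delta>(1)] \<delta>(2) regular]]
    by blast
  then show ?thesis
    using infinite_empty_pair_of_injective by blast
qed

end
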